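(* For every graph $G$ on vertex set $[n]$, the graph $\langle G\rangle_{K_4}$ consists of a triangle-free collection of edge-disjoint cliques.
   Context: $\langle G\rangle_{K_4}$ is the closure of $G$ under the $K_4$-bootstrap process on $K_n$: repeatedly add any edge of $K_n$ which is the only missing edge of some copy of $K_4$. A collection $\mathcal{K}$ of cliques is triangle-free if there do not exist distinct vertices $u,v,w$ and cliques $A,B,C \in \mathcal{K}$ with $u \in V(A)\cap V(B)$, $v \in V(B) \cap V(C)$ and $w \in V(A) \cap V(C)$. *)

theory Defs
  imports Main
begin

definition all_edges :: "nat \<Rightarrow> nat set set" where
  "all_edges n = {{u, v} | u v. u \<in> {1..n} \<and> v \<in> {1..n} \<and> u \<noteq> v}"

definition is_graph :: "nat \<Rightarrow> nat set set \<Rightarrow> bool" where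
  "is_graph n G \<longleftrightarrow> G \<subseteq> all_edges n"

text \<open>The K4-bootstrap closure on K_n: repeatedly add an edge which is the only
  missing edge of some copy of K4 in K_n.\<close>

inductive_set k4_closure :: "nat \<Rightarrow> nat set set \<Rightarrow> nat set set"
  for n :: nat and G :: "nat set set" where
  base: "e \<in> G \<Longrightarrow> e \<in> k4_closure n G"
| step: "\<lbrakk> a \<in> {1..n}; b \<in> {1..n}; c \<in> {1..n}; d \<in> {1..n};
           a \<noteq> b; a \<noteq> c; a \<noteq> d; b \<noteq> c; b \<noteq> d; c \<noteq> d;
           {a, c} \<in> k4_closure n G; {a, d} \<in> k4_closure n G;
           {b, c} \<in> k4_closure n G; {b, d} \<in> k4_closure n G;
           {c, d} \<in> k4_closure n G \<rbrakk> \<Longrightarrow> {a, b} \<in> k4_closure n G"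

definition clique_edges :: "nat set \<Rightarrow> nat set set" where
  "clique_edges A = {{u, v} | u v. u \<in> A \<and> v \<in> A \<and> u \<noteq> v}"

definition edge_disjoint_cliques :: "nat set set \<Rightarrow> bool" where
  "edge_disjoint_cliques K \<longleftrightarrow>
     (\<forall>A\<in>K. \<forall>B\<in>K. A \<noteq> B \<longrightarrow> clique_edges A \<inter> clique_edges B = {})"

definition triangle_free_cliques :: "nat set set \<Rightarrow> bool" where
  "triangle_free_cliques K \<longleftrightarrow>
     \<not> (\<exists>u v w A B C. u \<noteq> v \<and> v \<noteq> w \<and> u \<noteq> w \<and>
          A \<in> K \<and> B \<in> K \<and> C \<in> K \<and> A \<noteq> B \<and> B \<noteq> C \<and> A \<noteq> C \<and>
          u \<in> A \<inter> B \<and> v \<in> B \<inter> C \<and> w \<in> A \<inter> C)"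

end

theory Submission
  imports Defs
begin

text \<open>The K4-bootstrap closure H is K4-closed. In such a graph the vertices a, b of an
  edge together with their common neighbours form a clique: two common neighbours x, y
  span a K4 whose only possibly missing edge is xy. This clique is the same for each of
  its edges, so these cliques partition the edges of H and any two of them share at most
  one vertex. A triangle of such cliques through distinct vertices u, v, w is impossible:
  uv, vw, uw are then edges of H, so w is a common neighbour of u and v and the clique
  of uv contains w.\<close>

locale k4_closed_graph =
  fixes H :: "'a set set"
  assumes edge_doubleton: "e \<in> H \<Longrightarrow> \<exists>u v. u \<noteq> v \<and> e = {u, v}"
    and k4_closed: "\<lbrakk>distinct [a, b, c, d]; {a, c} \<in> H; {a, d} \<in> H; {b, c} \<in> H;
      {b, d} \<in> H; {c, d} \<in> H\<rbrakk> \<Longrightarrow> {a, b} \<in> H"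
begin

lemma edge_neq: "{u, v} \<in> H \<Longrightarrow> u \<noteq> v"
  using edge_doubleton by (metis doubleton_eq_iff insert_absorb2)

definition edge_clique :: "'a \<Rightarrow> 'a \<Rightarrow> 'a set" where
  "edge_clique a b = {a, b} \<union> {x. {a, x} \<in> H \<and> {b, x} \<in> H}"

lemma edge_clique_is_clique:
  assumes ab: "{a, b} \<in> H" and x: "x \<in> edge_clique a b" and y: "y \<in> edge_clique a b"
    and "x \<noteq> y"
  shows "{x, y} \<in> H"
proof (cases "x \<in> {a, b} \<or> y \<in> {a, b}")
  case True
  then show ?thesis using ab x y \<open>x \<noteq> y\<close> by (auto simp: edge_clique_def insert_commute)
next
  case False
  then have "{a, x} \<in> H" "{b, x} \<in> H" "{a, y} \<in> H" "{b, y} \<in> H"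
    using x y by (auto simp: edge_clique_def)
  moreover from this have "distinct [x, y, a, b]"
    using ab \<open>x \<noteq> y\<close> edge_neq by auto
  ultimately show ?thesis
    using k4_closed[of x y a b] ab by (simp add: insert_commute)
qed

lemma edge_clique_subset:
  assumes "{a, b} \<in> H" "x \<in> edge_clique a b" "y \<in> edge_clique a b"
  shows "edge_clique a b \<subseteq> edge_clique x y"
proof
  fix z assume z: "z \<in> edge_clique a b"
  show "z \<in> edge_clique x y"
  proof (cases "z = x \<or> z = y")
    case False
    then have "{x, z} \<in> H" "{y, z} \<in> H"
      using edge_clique_is_clique assms z by auto
    then show ?thesis by (simp add: edge_clique_def)
  qed (auto simp: edge_clique_def)
qed

lemma edge_clique_eq:
  assumes ab: "{a, b} \<in> H" and x: "x \<in> edge_clique a b" and y: "y \<in> edge_clique a b"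
    and "x \<noteq> y"
  shows "edge_clique x y = edge_clique a b"
proof
  show "edge_clique a b \<subseteq> edge_clique x y"
    using edge_clique_subset[OF ab x y] .
  then have "a \<in> edge_clique x y" "b \<in> edge_clique x y"
    by (auto simp: edge_clique_def)
  then show "edge_clique x y \<subseteq> edge_clique a b"
    using edge_clique_subset edge_clique_is_clique[OF ab x y \<open>x \<noteq> y\<close>] by blast
qed

definition edge_cliques :: "'a set set" where
  "edge_cliques = {edge_clique a b | a b. {a, b} \<in> H}"

lemma edge_cliques_eq_edge_clique:
  assumes "A \<in> edge_cliques" "u \<in> A" "v \<in> A" "u \<noteq> v"
  shows "{u, v} \<in> H" and "A = edge_clique u v"
proof -
  obtain a b where ab: "{a, b} \<in> H" and A: "A = edge_clique a b"
    using assms(1) unfolding edge_cliques_def by blast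
  show "{u, v} \<in> H"
    using edge_clique_is_clique[OF ab] assms(2-4) A by simp
  show "A = edge_clique u v"
    using edge_clique_eq[OF ab] assms(2-4) A by simp
qed

lemma edge_cliques_share_two_eq:
  assumes "A \<in> edge_cliques" "B \<in> edge_cliques" "u \<noteq> v" "u \<in> A" "v \<in> A" "u \<in> B" "v \<in> B"
  shows "A = B"
  using edge_cliques_eq_edge_clique(2)[OF assms(1,4,5,3)]
    edge_cliques_eq_edge_clique(2)[OF assms(2,6,7,3)] by simp

lemma edge_cliques_triangle_eq:
  assumes A: "A \<in> edge_cliques" and B: "B \<in> edge_cliques" and C: "C \<in> edge_cliques"
    and uv: "u \<noteq> v" and vw: "v \<noteq> w" and uw: "u \<noteq> w"
    and "u \<in> A" "w \<in> A" "u \<in> B" "v \<in> B" "v \<in> C" "w \<in> C"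
  shows "A = B"
proof -
  have "{u, w} \<in> H" "{v, w} \<in> H"
    using edge_cliques_eq_edge_clique(1) A C uw vw assms(7-12) by blast+
  then have "w \<in> edge_clique u v"
    by (simp add: edge_clique_def insert_commute)
  then have "w \<in> B"
    using edge_cliques_eq_edge_clique(2)[OF B \<open>u \<in> B\<close> \<open>v \<in> B\<close> uv] by simp
  then show ?thesis
    using edge_cliques_share_two_eq[OF A B uw] assms(7-9) by blast
qed

lemma edges_eq_Union_edge_cliques:
  "H = (\<Union>A\<in>edge_cliques. {{u, v} | u v. u \<in> A \<and> v \<in> A \<and> u \<noteq> v})"
proof
  show "H \<subseteq> (\<Union>A\<in>edge_cliques. {{u, v} | u v. u \<in> A \<and> v \<in> A \<and> u \<noteq> v})"
  proof
    fix e assume "e \<in> H"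
    then obtain a b where "a \<noteq> b" "e = {a, b}"
      using edge_doubleton by blast
    moreover from this have "edge_clique a b \<in> edge_cliques"
      using \<open>e \<in> H\<close> by (auto simp: edge_cliques_def)
    moreover have "a \<in> edge_clique a b" "b \<in> edge_clique a b"
      by (simp_all add: edge_clique_def)
    ultimately show "e \<in> (\<Union>A\<in>edge_cliques. {{u, v} | u v. u \<in> A \<and> v \<in> A \<and> u \<noteq> v})"
      by blast
  qed
qed (use edge_cliques_eq_edge_clique(1) in blast)

lemma edge_cliques_subset_vertices: "A \<in> edge_cliques \<Longrightarrow> A \<subseteq> \<Union>H"
  by (auto simp: edge_cliques_def edge_clique_def)

lemma card_edge_cliques:
  assumes "finite (\<Union>H)" "A \<in> edge_cliques"
  shows "2 \<le> card A"
proof -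
  obtain a b where "{a, b} \<in> H" "A = edge_clique a b"
    using assms(2) by (auto simp: edge_cliques_def)
  then have "{a, b} \<subseteq> A" "card {a, b} = 2"
    using edge_neq by (auto simp: edge_clique_def)
  moreover have "finite A"
    using assms edge_cliques_subset_vertices finite_subset by blast
  ultimately show ?thesis by (metis card_mono)
qed

end

lemma Union_all_edges: "\<Union>(all_edges n) \<subseteq> {1..n}"
  by (auto simp: all_edges_def)

lemma k4_closure_subset_all_edges:
  assumes "is_graph n G"
  shows "k4_closure n G \<subseteq> all_edges n"
proof
  fix e assume "e \<in> k4_closure n G"
  then show "e \<in> all_edges n"
  proof (induction rule: k4_closure.induct)
    case (base e)
    then show ?case using assms by (auto simp: is_graph_def)
  next
    case (step a b)
    show ?case using step.hyps(1,2,5) unfolding all_edges_def by blast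
  qed
qed

lemma k4_closure_vertices:
  assumes "is_graph n G"
  shows "\<Union>(k4_closure n G) \<subseteq> {1..n}"
  using Union_mono[OF k4_closure_subset_all_edges[OF assms]] Union_all_edges by (rule subset_trans)

lemma k4_closed_graph_k4_closure:
  assumes "is_graph n G"
  shows "k4_closed_graph (k4_closure n G)"
proof
  fix e assume "e \<in> k4_closure n G"
  then show "\<exists>u v. u \<noteq> v \<and> e = {u, v}"
    using k4_closure_subset_all_edges[OF assms] unfolding all_edges_def by blast
next
  fix a b c d
  assume distinct: "distinct [a, b, c, d]"
    and edges: "{a, c} \<in> k4_closure n G" "{a, d} \<in> k4_closure n G"
    "{b, c} \<in> k4_closure n G" "{b, d} \<in> k4_closure n G" "{c, d} \<in> k4_closure n G"
  have "{a, b, c, d} \<subseteq> \<Union>(k4_closure n G)"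
    using edges by blast
  then have "{a, b, c, d} \<subseteq> {1..n}"
    using k4_closure_vertices[OF assms] by (rule subset_trans)
  then have "a \<in> {1..n}" "b \<in> {1..n}" "c \<in> {1..n}" "d \<in> {1..n}"
    by (simp_all only: insert_subset)
  moreover have "a \<noteq> b" "a \<noteq> c" "a \<noteq> d" "b \<noteq> c" "b \<noteq> d" "c \<noteq> d"
    using distinct by simp_all
  ultimately show "{a, b} \<in> k4_closure n G"
    using edges by (rule k4_closure.step)
qed

theorem mainTheorem18:
  fixes n :: nat and G :: "nat set set"
  assumes "is_graph n G"
  shows "\<exists>K :: nat set set.
           (\<forall>A\<in>K. A \<subseteq> {1..n} \<and> card A \<ge> 2) \<and>
           edge_disjoint_cliques K \<and>
           triangle_free_cliques K \<and>
           k4_closure n G = (\<Union>A\<in>K. clique_edges A)"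
proof -
  interpret k4_closed_graph "k4_closure n G"
    using k4_closed_graph_k4_closure[OF assms] .
  note vertices = k4_closure_vertices[OF assms]
  show ?thesis
  proof (intro exI conjI)
    show "\<forall>A\<in>edge_cliques. A \<subseteq> {1..n} \<and> 2 \<le> card A"
      by (metis card_edge_cliques edge_cliques_subset_vertices finite_atLeastAtMost
          finite_subset subset_trans vertices)
    show "edge_disjoint_cliques edge_cliques"
      unfolding edge_disjoint_cliques_def clique_edges_def
      by (auto simp: doubleton_eq_iff dest: edge_cliques_share_two_eq)
    show "triangle_free_cliques edge_cliques"
      unfolding triangle_free_cliques_def using edge_cliques_triangle_eq by blast
    show "k4_closure n G = (\<Union>A\<in>edge_cliques. clique_edges A)"
      unfolding clique_edges_def by (rule edges_eq_Union_edge_cliques)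
  qed
qed

end
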